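(* If $(\Phi,\{J_{P(z)}\}_{z\in\mathbb C^\times},\varphi)$ is a (lax) vertex tensor functor between vertex tensor categories $\mathcal C_1$ and $\mathcal C_2$, then $(\Phi,J=J_{P(1)},\varphi)$ is a (lax) braided tensor functor with respect to the induced braided tensor category structures on $\mathcal C_1$ and $\mathcal C_2$.
   Context: A vertex tensor category (in the sense used here, following Huang–Lepowsky–Zhang, not necessarily consisting of modules) is a category with bifunctors $\boxtimes_{P(z)}$ for $z\in\mathbb C^\times$, a unit object, natural isomorphisms: parallel transport $T_\gamma:\boxtimes_{P(z_1)}\to\boxtimes_{P(z_2)}$ for each continuous path $\gamma$ in $\mathbb C^\times$ from $z_1$ to $z_2$ (written $T_{z_1\to z_2}$ when $\gamma$ does not cross the positive real axis), $P(z)$-unit isomorphisms $l_{P(z)},r_{P(z)}$, $P(z_1,z_2)$-associativity isomorphisms $\mathcal A_{P(z_1,z_2);W_1,W_2,W_3}:W_1\boxtimes_{P(z_1)}(W_2\boxtimes_{P(z_2)}W_3)\to(W_1\boxtimes_{P(z_1-z_2)}W_2)\boxtimes_{P(z_2)}W_3$ for $|z_1|>|z_2|>|z_1-z_2|>0$, and $P(z)$-braiding isomorphisms $\mathcal R_{P(z);W_1,W_2}:W_1\boxtimes_{P(z)}W_2\to W_2\boxtimes_{P(-z)}W_1$, satisfying coherence conditions. The induced braided tensor category has $\boxtimes=\boxtimes_{P(1)}$, $l=l_{P(1)}$, $r=r_{P(1)}$, associativity $\mathcal A=T_{r_2\to1}\circ(T_{r_1-r_2\to1}\boxtimes_{P(r_2)}1)\circ\mathcal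 A_{P(r_1,r_2)}\circ(1\boxtimes_{P(r_1)}T_{1\to r_2})\circ T_{1\to r_1}$ for reals $r_1>r_2>r_1-r_2>0$ (independent of the choice), and braiding $\mathcal R=T_{-1\to1}\circ\mathcal R_{P(1)}$. A (lax) vertex tensor functor is $(\Phi,\{J_{P(z)}\},\varphi)$ with $\Phi:\mathcal C_1\to\mathcal C_2$ a functor, $J_{P(z)}:\boxtimes_{P(z)}\circ(\Phi\times\Phi)\to\Phi\circ\boxtimes_{P(z)}$ natural isomorphisms (natural transformations in the lax case), $\varphi:V_2\to\Phi(V_1)$ an isomorphism between the unit objects, such that: $J_{P(z_2)}\circ T_\gamma=\Phi(T_\gamma)\circ J_{P(z_1)}$ for all paths $\gamma$ from $z_1$ to $z_2$; $\Phi(l_{P(z)})\circ J_{P(z);V_1,M}\circ(\varphi\boxtimes_{P(z)}1)=l_{P(z);\Phi(M)}$ and $\Phi(r_{P(z)})\circ J_{P(z);M,V_1}\circ(1\boxtimes_{P(z)}\varphi)=r_{P(z);\Phi(M)}$; $J_{P(z_2)}\circ(J_{P(z_1-z_2)}\boxtimes_{P(z_2)}1)\circ\mathcal A_{P(z_1,z_2)}=\Phi(\mathcal A_{P(z_1,z_2)})\circ J_{P(z_1)}\circ(1\boxtimes_{P(z_1)}J_{P(z_2)})$ for $|z_1|>|z_2|>|z_1-z_2|>0$; and $J_{P(-z);M_2,M_1}\circ\mathcal R_{P(z)}=\Phi(\mathcal R_{P(z)})\circ J_{P(z);M_1,M_2}$. A (lax) braided tensor functor is a functor with (not necessarily invertible,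 in the lax case) natural $J:\Phi(\cdot)\boxtimes\Phi(\cdot)\to\Phi(\cdot\boxtimes\cdot)$ and unit isomorphism $\varphi$ compatible with the unit, associativity and braiding isomorphisms. *)

theory Defs
  imports "HOL-Analysis.Analysis"
begin

record ('o, 'm) category =
  Ob  :: "'o set"
  Ar  :: "'m set"
  Dom :: "'m \<Rightarrow> 'o"
  Cod :: "'m \<Rightarrow> 'o"
  Cmp :: "'m \<Rightarrow> 'm \<Rightarrow> 'm"   (* Cmp C g f = g o f *)
  Idm :: "'o \<Rightarrow> 'm"

definition hom :: "('o, 'm) category \<Rightarrow> 'o \<Rightarrow> 'o \<Rightarrow> 'm set" where
  "hom C A B = {f \<in> Ar C. Dom C f = A \<and> Cod C f = B}"

definition is_category :: "('o, 'm) category \<Rightarrow> bool" where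
  "is_category C \<longleftrightarrow>
     (\<forall>f\<in>Ar C. Dom C f \<in> Ob C \<and> Cod C f \<in> Ob C) \<and>
     (\<forall>A\<in>Ob C. Idm C A \<in> hom C A A) \<and>
     (\<forall>f\<in>Ar C. \<forall>g\<in>Ar C. Cod C f = Dom C g \<longrightarrow>
         Cmp C g f \<in> hom C (Dom C f) (Cod C g)) \<and>
     (\<forall>f\<in>Ar C. Cmp C (Idm C (Cod C f)) f = f \<and> Cmp C f (Idm C (Dom C f)) = f) \<and>
     (\<forall>f\<in>Ar C. \<forall>g\<in>Ar C. \<forall>h\<in>Ar C. Cod C f = Dom C g \<longrightarrow> Cod C g = Dom C h \<longrightarrow>
         Cmp C h (Cmp C g f) = Cmp C (Cmp C h g) f)"

definition is_iso :: "('o, 'm) category \<Rightarrow> 'm \<Rightarrow> bool" where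
  "is_iso C f \<longleftrightarrow> f \<in> Ar C \<and>
     (\<exists>g\<in>hom C (Cod C f) (Dom C f).
        Cmp C g f = Idm C (Dom C f) \<and> Cmp C f g = Idm C (Cod C f))"

definition is_bifunctor ::
  "('o, 'm) category \<Rightarrow> ('o \<Rightarrow> 'o \<Rightarrow> 'o) \<Rightarrow> ('m \<Rightarrow> 'm \<Rightarrow> 'm) \<Rightarrow> bool" where
  "is_bifunctor C tob tar \<longleftrightarrow>
     (\<forall>A\<in>Ob C. \<forall>B\<in>Ob C. tob A B \<in> Ob C) \<and>
     (\<forall>f\<in>Ar C. \<forall>g\<in>Ar C. tar f g \<in> hom C (tob (Dom C f) (Dom C g)) (tob (Cod C f) (Cod C g))) \<and>
     (\<forall>A\<in>Ob C. \<forall>B\<in>Ob C. tar (Idm C A) (Idm C B) = Idm C (tob A B)) \<and>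
     (\<forall>f\<in>Ar C. \<forall>g\<in>Ar C. \<forall>f'\<in>Ar C. \<forall>g'\<in>Ar C.
        Cod C f = Dom C g \<longrightarrow> Cod C f' = Dom C g' \<longrightarrow>
        tar (Cmp C g f) (Cmp C g' f') = Cmp C (tar g g') (tar f f'))"

definition is_functor ::
  "('o1, 'm1) category \<Rightarrow> ('o2, 'm2) category \<Rightarrow> ('o1 \<Rightarrow> 'o2) \<Rightarrow> ('m1 \<Rightarrow> 'm2) \<Rightarrow> bool" where
  "is_functor C1 C2 Fo Fm \<longleftrightarrow>
     (\<forall>A\<in>Ob C1. Fo A \<in> Ob C2) \<and>
     (\<forall>f\<in>Ar C1. Fm f \<in> hom C2 (Fo (Dom C1 f)) (Fo (Cod C1 f))) \<and>
     (\<forall>A\<in>Ob C1. Fm (Idm C1 A) = Idm C2 (Fo A)) \<and>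
     (\<forall>f\<in>Ar C1. \<forall>g\<in>Ar C1. Cod C1 f = Dom C1 g \<longrightarrow> Fm (Cmp C1 g f) = Cmp C2 (Fm g) (Fm f))"

definition cpath :: "(real \<Rightarrow> complex) \<Rightarrow> bool" where
  "cpath \<gamma> \<longleftrightarrow> path \<gamma> \<and> path_image \<gamma> \<subseteq> - {0}"

record ('o, 'm) vtc_data =
  VCat :: "('o, 'm) category"
  VTob :: "complex \<Rightarrow> 'o \<Rightarrow> 'o \<Rightarrow> 'o"      (* object part of the P(z)-tensor product *)
  VTar :: "complex \<Rightarrow> 'm \<Rightarrow> 'm \<Rightarrow> 'm"
  VUnit :: "'o"
  VPar :: "(real \<Rightarrow> complex) \<Rightarrow> 'o \<Rightarrow> 'o \<Rightarrow> 'm"  (* parallel transport T_gamma *)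
  VL :: "complex \<Rightarrow> 'o \<Rightarrow> 'm"
  VR :: "complex \<Rightarrow> 'o \<Rightarrow> 'm"
  VA :: "complex \<Rightarrow> complex \<Rightarrow> 'o \<Rightarrow> 'o \<Rightarrow> 'o \<Rightarrow> 'm"
  VB :: "complex \<Rightarrow> 'o \<Rightarrow> 'o \<Rightarrow> 'm"

definition assoc_dom :: "complex \<Rightarrow> complex \<Rightarrow> bool" where
  "assoc_dom z1 z2 \<longleftrightarrow> cmod z1 > cmod z2 \<and> cmod z2 > cmod (z1 - z2) \<and> cmod (z1 - z2) > 0"

definition is_vtc :: "('o, 'm) vtc_data \<Rightarrow> bool" where
  "is_vtc V \<longleftrightarrow> (let C = VCat V in
     is_category C \<and> VUnit V \<in> Ob C \<and>
     (\<forall>z. z \<noteq> 0 \<longrightarrow> is_bifunctor C (VTob V z) (VTar V z)) \<and>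
     (\<forall>\<gamma>. cpath \<gamma> \<longrightarrow>
        (\<forall>A\<in>Ob C. \<forall>B\<in>Ob C.
           VPar V \<gamma> A B \<in> hom C (VTob V (pathstart \<gamma>) A B) (VTob V (pathfinish \<gamma>) A B) \<and>
           is_iso C (VPar V \<gamma> A B)) \<and>
        (\<forall>f\<in>Ar C. \<forall>g\<in>Ar C.
           Cmp C (VPar V \<gamma> (Cod C f) (Cod C g)) (VTar V (pathstart \<gamma>) f g) =
           Cmp C (VTar V (pathfinish \<gamma>) f g) (VPar V \<gamma> (Dom C f) (Dom C g)))) \<and>
     (\<forall>z. z \<noteq> 0 \<longrightarrow>
        (\<forall>W\<in>Ob C. VL V z W \<in> hom C (VTob V z (VUnit V) W) W \<and> is_iso C (VL V z W)
                 \<and> VR V z W \<in> hom C (VTob V z W (VUnit V)) W \<and> is_iso C (VR V z W)) \<and>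
        (\<forall>f\<in>Ar C. Cmp C f (VL V z (Dom C f)) =
                     Cmp C (VL V z (Cod C f)) (VTar V z (Idm C (VUnit V)) f)
                 \<and> Cmp C f (VR V z (Dom C f)) =
                     Cmp C (VR V z (Cod C f)) (VTar V z f (Idm C (VUnit V))))) \<and>
     (\<forall>z1 z2. assoc_dom z1 z2 \<longrightarrow>
        (\<forall>A\<in>Ob C. \<forall>B\<in>Ob C. \<forall>D\<in>Ob C.
           VA V z1 z2 A B D \<in> hom C (VTob V z1 A (VTob V z2 B D))
                                    (VTob V z2 (VTob V (z1 - z2) A B) D) \<and>
           is_iso C (VA V z1 z2 A B D)) \<and>
        (\<forall>f\<in>Ar C. \<forall>g\<in>Ar C. \<forall>h\<in>Ar C.
           Cmp C (VA V z1 z2 (Cod C f) (Cod C g) (Cod C h)) (VTar V z1 f (VTar V z2 g h)) =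
           Cmp C (VTar V z2 (VTar V (z1 - z2) f g) h) (VA V z1 z2 (Dom C f) (Dom C g) (Dom C h)))) \<and>
     (\<forall>z. z \<noteq> 0 \<longrightarrow>
        (\<forall>A\<in>Ob C. \<forall>B\<in>Ob C. VB V z A B \<in> hom C (VTob V z A B) (VTob V (- z) B A) \<and>
                             is_iso C (VB V z A B)) \<and>
        (\<forall>f\<in>Ar C. \<forall>g\<in>Ar C.
           Cmp C (VB V z (Cod C f) (Cod C g)) (VTar V z f g) =
           Cmp C (VTar V (- z) g f) (VB V z (Dom C f) (Dom C g)))))"

text \<open>\<open>strong = True\<close>: the J_{P(z)} are natural isomorphisms; \<open>strong = False\<close>: lax case.\<close>
definition is_vertex_tensor_functor ::
  "bool \<Rightarrow> ('o1, 'm1) vtc_data \<Rightarrow> ('o2, 'm2) vtc_data \<Rightarrow> ('o1 \<Rightarrow> 'o2) \<Rightarrow> ('m1 \<Rightarrow> 'm2)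
    \<Rightarrow> (complex \<Rightarrow> 'o1 \<Rightarrow> 'o1 \<Rightarrow> 'm2) \<Rightarrow> 'm2 \<Rightarrow> bool" where
  "is_vertex_tensor_functor strong V1 V2 Fo Fm J \<phi> \<longleftrightarrow>
   (let C1 = VCat V1; C2 = VCat V2 in
     is_functor C1 C2 Fo Fm \<and>
     (\<forall>z. z \<noteq> 0 \<longrightarrow>
        (\<forall>A\<in>Ob C1. \<forall>B\<in>Ob C1.
           J z A B \<in> hom C2 (VTob V2 z (Fo A) (Fo B)) (Fo (VTob V1 z A B)) \<and>
           (strong \<longrightarrow> is_iso C2 (J z A B))) \<and>
        (\<forall>f\<in>Ar C1. \<forall>g\<in>Ar C1.
           Cmp C2 (Fm (VTar V1 z f g)) (J z (Dom C1 f) (Dom C1 g)) =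
           Cmp C2 (J z (Cod C1 f) (Cod C1 g)) (VTar V2 z (Fm f) (Fm g)))) \<and>
     \<phi> \<in> hom C2 (VUnit V2) (Fo (VUnit V1)) \<and> is_iso C2 \<phi> \<and>
     (\<forall>\<gamma>. cpath \<gamma> \<longrightarrow> (\<forall>A\<in>Ob C1. \<forall>B\<in>Ob C1.
        Cmp C2 (J (pathfinish \<gamma>) A B) (VPar V2 \<gamma> (Fo A) (Fo B)) =
        Cmp C2 (Fm (VPar V1 \<gamma> A B)) (J (pathstart \<gamma>) A B))) \<and>
     (\<forall>z. z \<noteq> 0 \<longrightarrow> (\<forall>M\<in>Ob C1.
        Cmp C2 (Fm (VL V1 z M)) (Cmp C2 (J z (VUnit V1) M) (VTar V2 z \<phi> (Idm C2 (Fo M))))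
          = VL V2 z (Fo M) \<and>
        Cmp C2 (Fm (VR V1 z M)) (Cmp C2 (J z M (VUnit V1)) (VTar V2 z (Idm C2 (Fo M)) \<phi>))
          = VR V2 z (Fo M))) \<and>
     (\<forall>z1 z2. assoc_dom z1 z2 \<longrightarrow> (\<forall>M1\<in>Ob C1. \<forall>M2\<in>Ob C1. \<forall>M3\<in>Ob C1.
        Cmp C2 (J z2 (VTob V1 (z1 - z2) M1 M2) M3)
          (Cmp C2 (VTar V2 z2 (J (z1 - z2) M1 M2) (Idm C2 (Fo M3)))
                  (VA V2 z1 z2 (Fo M1) (Fo M2) (Fo M3))) =
        Cmp C2 (Fm (VA V1 z1 z2 M1 M2 M3))
          (Cmp C2 (J z1 M1 (VTob V1 z2 M2 M3))
                  (VTar V2 z1 (Idm C2 (Fo M1)) (J z2 M2 M3))))) \<and>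
     (\<forall>z. z \<noteq> 0 \<longrightarrow> (\<forall>M1\<in>Ob C1. \<forall>M2\<in>Ob C1.
        Cmp C2 (J (- z) M2 M1) (VB V2 z (Fo M1) (Fo M2)) =
        Cmp C2 (Fm (VB V1 z M1 M2)) (J z M1 M2))))"

record ('o, 'm) btc_data =
  BCat :: "('o, 'm) category"
  BTob :: "'o \<Rightarrow> 'o \<Rightarrow> 'o"
  BTar :: "'m \<Rightarrow> 'm \<Rightarrow> 'm"
  BUnit :: "'o"
  BL :: "'o \<Rightarrow> 'm"
  BR :: "'o \<Rightarrow> 'm"
  BA :: "'o \<Rightarrow> 'o \<Rightarrow> 'o \<Rightarrow> 'm"   (* W1 (x) (W2 (x) W3) -> (W1 (x) W2) (x) W3 *)
  BB :: "'o \<Rightarrow> 'o \<Rightarrow> 'm"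

definition is_braided_tensor_functor ::
  "bool \<Rightarrow> ('o1, 'm1) btc_data \<Rightarrow> ('o2, 'm2) btc_data \<Rightarrow> ('o1 \<Rightarrow> 'o2) \<Rightarrow> ('m1 \<Rightarrow> 'm2)
    \<Rightarrow> ('o1 \<Rightarrow> 'o1 \<Rightarrow> 'm2) \<Rightarrow> 'm2 \<Rightarrow> bool" where
  "is_braided_tensor_functor strong B1 B2 Fo Fm J \<phi> \<longleftrightarrow>
   (let C1 = BCat B1; C2 = BCat B2 in
     is_functor C1 C2 Fo Fm \<and>
     (\<forall>A\<in>Ob C1. \<forall>B\<in>Ob C1.
        J A B \<in> hom C2 (BTob B2 (Fo A) (Fo B)) (Fo (BTob B1 A B)) \<and>
        (strong \<longrightarrow> is_iso C2 (J A B))) \<and>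
     (\<forall>f\<in>Ar C1. \<forall>g\<in>Ar C1.
        Cmp C2 (Fm (BTar B1 f g)) (J (Dom C1 f) (Dom C1 g)) =
        Cmp C2 (J (Cod C1 f) (Cod C1 g)) (BTar B2 (Fm f) (Fm g))) \<and>
     \<phi> \<in> hom C2 (BUnit B2) (Fo (BUnit B1)) \<and> is_iso C2 \<phi> \<and>
     (\<forall>M\<in>Ob C1.
        Cmp C2 (Fm (BL B1 M)) (Cmp C2 (J (BUnit B1) M) (BTar B2 \<phi> (Idm C2 (Fo M))))
          = BL B2 (Fo M) \<and>
        Cmp C2 (Fm (BR B1 M)) (Cmp C2 (J M (BUnit B1)) (BTar B2 (Idm C2 (Fo M)) \<phi>))
          = BR B2 (Fo M)) \<and>
     (\<forall>M1\<in>Ob C1. \<forall>M2\<in>Ob C1. \<forall>M3\<in>Ob C1.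
        Cmp C2 (J (BTob B1 M1 M2) M3)
          (Cmp C2 (BTar B2 (J M1 M2) (Idm C2 (Fo M3))) (BA B2 (Fo M1) (Fo M2) (Fo M3))) =
        Cmp C2 (Fm (BA B1 M1 M2 M3))
          (Cmp C2 (J M1 (BTob B1 M2 M3)) (BTar B2 (Idm C2 (Fo M1)) (J M2 M3)))) \<and>
     (\<forall>M1\<in>Ob C1. \<forall>M2\<in>Ob C1.
        Cmp C2 (J M2 M1) (BB B2 (Fo M1) (Fo M2)) = Cmp C2 (Fm (BB B1 M1 M2)) (J M1 M2)))"

text \<open>T_{z1 -> z2} for positive reals: the straight segment (stays on the positive real axis).\<close>
definition rpath :: "real \<Rightarrow> real \<Rightarrow> real \<Rightarrow> complex" where
  "rpath r s = linepath (complex_of_real r) (complex_of_real s)"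

text \<open>T_{-1 -> 1}: a path from -1 to 1 not crossing the positive real axis
  (arg convention 0 <= arg < 2 pi): the upper unit semicircle, traversed clockwise.\<close>
definition minus_one_to_one :: "real \<Rightarrow> complex" where
  "minus_one_to_one t = exp (\<i> * complex_of_real (pi * (1 - t)))"

definition induced_assoc :: "('o, 'm) vtc_data \<Rightarrow> real \<Rightarrow> real \<Rightarrow> 'o \<Rightarrow> 'o \<Rightarrow> 'o \<Rightarrow> 'm" where
  "induced_assoc V r1 r2 W1 W2 W3 =
    (let C = VCat V in
     Cmp C (VPar V (rpath r2 1) (VTob V 1 W1 W2) W3)
      (Cmp C (VTar V (complex_of_real r2) (VPar V (rpath (r1 - r2) 1) W1 W2) (Idm C W3))
       (Cmp C (VA V (complex_of_real r1) (complex_of_real r2) W1 W2 W3)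
        (Cmp C (VTar V (complex_of_real r1) (Idm C W1) (VPar V (rpath 1 r2) W2 W3))
               (VPar V (rpath 1 r1) W1 (VTob V 1 W2 W3))))))"

definition induced_btc :: "('o, 'm) vtc_data \<Rightarrow> real \<Rightarrow> real \<Rightarrow> ('o, 'm) btc_data" where
  "induced_btc V r1 r2 =
    \<lparr> BCat = VCat V, BTob = VTob V 1, BTar = VTar V 1, BUnit = VUnit V,
      BL = VL V 1, BR = VR V 1, BA = induced_assoc V r1 r2,
      BB = (\<lambda>W1 W2. Cmp (VCat V) (VPar V minus_one_to_one W2 W1) (VB V 1 W1 W2)) \<rparr>"

end

(* Every factor of the induced associativity and braiding isomorphisms (a parallel transport,
   a parallel transport tensored with an identity, an associativity isomorphism A_{P(z1,z2)} or a
   braiding R_{P(z)}) intertwines suitable composites of the maps J_{P(z)}.  For transports this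
   follows from the compatibility of J with parallel transport together with the naturality of J
   and of the transports; for A and R it is an axiom of a vertex tensor functor.  Pasting these
   commutative squares along the composites that define the induced structure yields the
   associativity and braiding conditions for J_{P(1)}; the unit conditions are the instances
   z = 1 of the vertex tensor functor axioms. *)

theory Submission
  imports Defs
begin

lemma cpath_rpath:
  assumes "0 < a" "0 < b"
  shows "cpath (rpath a b)"
proof -
  have "(0::real) \<notin> closed_segment a b"
    using assms by (auto simp: closed_segment_eq_real_ivl split: if_splits)
  then have "(0::complex) \<notin> closed_segment (of_real a) (of_real b)"
    by (metis of_real_0 of_real_closed_segment)
  then show ?thesis
    unfolding cpath_def rpath_def by auto
qed

lemma rpath_ends [simp]:
  "pathstart (rpath a b) = of_real a" "pathfinish (rpath a b) = of_real b"
  by (simp_all add: rpath_def)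

lemma cpath_minus_one_to_one: "cpath minus_one_to_one"
  unfolding cpath_def path_def path_image_def minus_one_to_one_def
  by (auto intro!: continuous_intros)

lemma minus_one_to_one_ends [simp]:
  "pathstart minus_one_to_one = -1" "pathfinish minus_one_to_one = 1"
  by (simp_all add: pathstart_def pathfinish_def minus_one_to_one_def)

lemma cpath_ends_nonzero [simp]:
  assumes "cpath \<gamma>"
  shows "pathstart \<gamma> \<noteq> 0" "pathfinish \<gamma> \<noteq> 0"
  using assms pathstart_in_path_image pathfinish_in_path_image unfolding cpath_def by blast+

lemma assoc_dom_nonzero:
  assumes "assoc_dom z1 z2"
  shows "z1 \<noteq> 0" "z2 \<noteq> 0" "z1 - z2 \<noteq> 0"
  using assms unfolding assoc_dom_def by auto

lemma assoc_dom_of_real: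
  assumes "r2 < r1" "r1 - r2 < r2" "0 < r1 - r2"
  shows "assoc_dom (of_real r1) (of_real r2)"
  using assms unfolding assoc_dom_def by (simp flip: of_real_diff)

lemma hom_iff [simp]: "f \<in> hom C A B \<longleftrightarrow> f \<in> Ar C \<and> Dom C f = A \<and> Cod C f = B"
  by (simp add: hom_def)

locale category =
  fixes C :: "('o, 'm) category"
  assumes is_category: "is_category C"
begin

lemma Idm_hom: "A \<in> Ob C \<Longrightarrow> Idm C A \<in> hom C A A"
  using is_category unfolding is_category_def by auto

declare Idm_hom [unfolded hom_iff, simp]

context
  fixes f g
  assumes f: "f \<in> Ar C" and g: "g \<in> Ar C" and fg: "Cod C f = Dom C g"
begin

lemma Cmp_Ar [simp]: "Cmp C g f \<in> Ar C"
  and Dom_Cmp [simp]: "Dom C (Cmp C g f) = Dom C f"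
  and Cod_Cmp [simp]: "Cod C (Cmp C g f) = Cod C g"
  using is_category f g fg unfolding is_category_def by auto

end

lemma Cmp_assoc:
  "\<lbrakk>f \<in> Ar C; g \<in> Ar C; h \<in> Ar C; Cod C f = Dom C g; Cod C g = Dom C h\<rbrakk>
    \<Longrightarrow> Cmp C h (Cmp C g f) = Cmp C (Cmp C h g) f"
  using is_category unfolding is_category_def by auto

lemma comm_square_paste:
  assumes left: "Cmp C b g = Cmp C h a" and right: "Cmp C c g' = Cmp C h' b"
    and "a \<in> Ar C" "b \<in> Ar C" "c \<in> Ar C" "g \<in> Ar C" "g' \<in> Ar C" "h \<in> Ar C" "h' \<in> Ar C"
    and "Cod C g = Dom C g'" "Cod C g' = Dom C c" "Cod C g = Dom C b"
    and "Cod C b = Dom C h'" "Cod C a = Dom C h" "Cod C h = Dom C h'"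
  shows "Cmp C c (Cmp C g' g) = Cmp C (Cmp C h' h) a"
proof -
  have "Cmp C c (Cmp C g' g) = Cmp C (Cmp C h' b) g"
    using assms by (simp add: Cmp_assoc flip: right)
  also have "\<dots> = Cmp C h' (Cmp C h a)"
    using assms by (simp add: Cmp_assoc flip: left)
  also have "\<dots> = Cmp C (Cmp C h' h) a"
    using assms by (simp add: Cmp_assoc)
  finally show ?thesis .
qed

end

locale cat_functor = C1: category C1 + C2: category C2
  for C1 :: "('o1, 'm1) category" and C2 :: "('o2, 'm2) category" +
  fixes Fo :: "'o1 \<Rightarrow> 'o2" and Fm :: "'m1 \<Rightarrow> 'm2"
  assumes is_functor: "is_functor C1 C2 Fo Fm"
begin

lemma Fo_Ob [simp]: "A \<in> Ob C1 \<Longrightarrow> Fo A \<in> Ob C2"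
  using is_functor unfolding is_functor_def by auto

lemma Fm_hom: "f \<in> Ar C1 \<Longrightarrow> Fm f \<in> hom C2 (Fo (Dom C1 f)) (Fo (Cod C1 f))"
  using is_functor unfolding is_functor_def by auto

declare Fm_hom [unfolded hom_iff, simp]

lemma Fm_Idm [simp]: "A \<in> Ob C1 \<Longrightarrow> Fm (Idm C1 A) = Idm C2 (Fo A)"
  using is_functor unfolding is_functor_def by auto

lemma Fm_Cmp:
  "\<lbrakk>f \<in> Ar C1; g \<in> Ar C1; Cod C1 f = Dom C1 g\<rbrakk> \<Longrightarrow> Fm (Cmp C1 g f) = Cmp C2 (Fm g) (Fm f)"
  using is_functor unfolding is_functor_def by auto

lemma Fm_square_paste:
  assumes "Cmp C2 b g = Cmp C2 (Fm f) a" and "Cmp C2 c g' = Cmp C2 (Fm f') b"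
    and "a \<in> Ar C2" "b \<in> Ar C2" "c \<in> Ar C2" "g \<in> Ar C2" "g' \<in> Ar C2" "f \<in> Ar C1" "f' \<in> Ar C1"
    and "Cod C2 g = Dom C2 g'" "Cod C2 g' = Dom C2 c" "Cod C2 g = Dom C2 b"
    and "Cod C2 b = Fo (Dom C1 f')" "Cod C2 a = Fo (Dom C1 f)" "Cod C1 f = Dom C1 f'"
  shows "Cmp C2 c (Cmp C2 g' g) = Cmp C2 (Fm (Cmp C1 f' f)) a"
  using C2.comm_square_paste[OF assms(1,2)] assms by (simp add: Fm_Cmp)

end

locale vertex_tensor_category =
  fixes V :: "('o, 'm) vtc_data"
  assumes is_vtc: "is_vtc V"

sublocale vertex_tensor_category \<subseteq> category "VCat V"
  using is_vtc by unfold_locales (simp add: is_vtc_def Let_def)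

context vertex_tensor_category
begin

lemma bifunctor: "z \<noteq> 0 \<Longrightarrow> is_bifunctor (VCat V) (VTob V z) (VTar V z)"
  using is_vtc unfolding is_vtc_def Let_def by auto

lemma Tob_Ob [simp]:
  "\<lbrakk>z \<noteq> 0; A \<in> Ob (VCat V); B \<in> Ob (VCat V)\<rbrakk> \<Longrightarrow> VTob V z A B \<in> Ob (VCat V)"
  using bifunctor unfolding is_bifunctor_def by auto

lemma Tar_hom:
  "\<lbrakk>z \<noteq> 0; f \<in> Ar (VCat V); g \<in> Ar (VCat V)\<rbrakk> \<Longrightarrow> VTar V z f g
     \<in> hom (VCat V) (VTob V z (Dom (VCat V) f) (Dom (VCat V) g)) (VTob V z (Cod (VCat V) f) (Cod (VCat V) g))"
  using bifunctor unfolding is_bifunctor_def by blast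

declare Tar_hom [unfolded hom_iff, simp]

lemma Tar_Cmp:
  "\<lbrakk>z \<noteq> 0; f \<in> Ar (VCat V); g \<in> Ar (VCat V); f' \<in> Ar (VCat V); g' \<in> Ar (VCat V);
    Cod (VCat V) f = Dom (VCat V) g; Cod (VCat V) f' = Dom (VCat V) g'\<rbrakk>
    \<Longrightarrow> VTar V z (Cmp (VCat V) g f) (Cmp (VCat V) g' f') = Cmp (VCat V) (VTar V z g g') (VTar V z f f')"
  using bifunctor unfolding is_bifunctor_def by blast

lemma Tar_comm_square:
  assumes "Cmp (VCat V) b g = Cmp (VCat V) h a" and "Cmp (VCat V) b' g' = Cmp (VCat V) h' a'"
    and "z \<noteq> 0" "a \<in> Ar (VCat V)" "b \<in> Ar (VCat V)" "g \<in> Ar (VCat V)" "h \<in> Ar (VCat V)"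
    and "a' \<in> Ar (VCat V)" "b' \<in> Ar (VCat V)" "g' \<in> Ar (VCat V)" "h' \<in> Ar (VCat V)"
    and "Cod (VCat V) g = Dom (VCat V) b" "Cod (VCat V) a = Dom (VCat V) h"
    and "Cod (VCat V) g' = Dom (VCat V) b'" "Cod (VCat V) a' = Dom (VCat V) h'"
  shows "Cmp (VCat V) (VTar V z b b') (VTar V z g g') = Cmp (VCat V) (VTar V z h h') (VTar V z a a')"
  using assms by (simp flip: Tar_Cmp)

lemma Par_hom:
  "\<lbrakk>cpath \<gamma>; A \<in> Ob (VCat V); B \<in> Ob (VCat V)\<rbrakk>
    \<Longrightarrow> VPar V \<gamma> A B \<in> hom (VCat V) (VTob V (pathstart \<gamma>) A B) (VTob V (pathfinish \<gamma>) A B)"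
  using is_vtc unfolding is_vtc_def Let_def by meson

declare Par_hom [unfolded hom_iff, simp]

lemma Par_natural:
  "\<lbrakk>cpath \<gamma>; f \<in> Ar (VCat V); g \<in> Ar (VCat V)\<rbrakk> \<Longrightarrow>
    Cmp (VCat V) (VPar V \<gamma> (Cod (VCat V) f) (Cod (VCat V) g)) (VTar V (pathstart \<gamma>) f g) =
    Cmp (VCat V) (VTar V (pathfinish \<gamma>) f g) (VPar V \<gamma> (Dom (VCat V) f) (Dom (VCat V) g))"
  using is_vtc unfolding is_vtc_def Let_def by meson

lemma A_hom:
  "\<lbrakk>assoc_dom z1 z2; A \<in> Ob (VCat V); B \<in> Ob (VCat V); D \<in> Ob (VCat V)\<rbrakk>
    \<Longrightarrow> VA V z1 z2 A B D \<in> hom (VCat V) (VTob V z1 A (VTob V z2 B D)) (VTob V z2 (VTob V (z1 - z2) A B) D)"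
  using is_vtc unfolding is_vtc_def Let_def by meson

declare A_hom [unfolded hom_iff, simp]

lemma B_hom:
  "\<lbrakk>z \<noteq> 0; A \<in> Ob (VCat V); B \<in> Ob (VCat V)\<rbrakk>
    \<Longrightarrow> VB V z A B \<in> hom (VCat V) (VTob V z A B) (VTob V (- z) B A)"
  using is_vtc unfolding is_vtc_def Let_def by meson

declare B_hom [unfolded hom_iff, simp]

end

locale vertex_tensor_functor = V1: vertex_tensor_category V1 + V2: vertex_tensor_category V2
  for V1 :: "('o1, 'm1) vtc_data" and V2 :: "('o2, 'm2) vtc_data" +
  fixes strong :: bool and Fo :: "'o1 \<Rightarrow> 'o2" and Fm :: "'m1 \<Rightarrow> 'm2"
    and J :: "complex \<Rightarrow> 'o1 \<Rightarrow> 'o1 \<Rightarrow> 'm2" and \<phi> :: 'm2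
  assumes is_vtf: "is_vertex_tensor_functor strong V1 V2 Fo Fm J \<phi>"
begin

abbreviation C1 where "C1 \<equiv> VCat V1"
abbreviation C2 where "C2 \<equiv> VCat V2"

sublocale cat_functor C1 C2 Fo Fm
  using is_vtf by unfold_locales (simp add: is_vertex_tensor_functor_def Let_def)

lemma J_hom:
  "\<lbrakk>z \<noteq> 0; A \<in> Ob C1; B \<in> Ob C1\<rbrakk> \<Longrightarrow> J z A B \<in> hom C2 (VTob V2 z (Fo A) (Fo B)) (Fo (VTob V1 z A B))"
  using is_vtf unfolding is_vertex_tensor_functor_def Let_def by meson

declare J_hom [unfolded hom_iff, simp]

lemma J_natural:
  "\<lbrakk>z \<noteq> 0; f \<in> Ar C1; g \<in> Ar C1\<rbrakk> \<Longrightarrow>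
    Cmp C2 (Fm (VTar V1 z f g)) (J z (Dom C1 f) (Dom C1 g)) =
    Cmp C2 (J z (Cod C1 f) (Cod C1 g)) (VTar V2 z (Fm f) (Fm g))"
  using is_vtf unfolding is_vertex_tensor_functor_def Let_def by meson

lemma J_Par:
  "\<lbrakk>cpath \<gamma>; A \<in> Ob C1; B \<in> Ob C1\<rbrakk> \<Longrightarrow>
    Cmp C2 (J (pathfinish \<gamma>) A B) (VPar V2 \<gamma> (Fo A) (Fo B)) =
    Cmp C2 (Fm (VPar V1 \<gamma> A B)) (J (pathstart \<gamma>) A B)"
  using is_vtf unfolding is_vertex_tensor_functor_def Let_def by meson

lemma J_B:
  "\<lbrakk>z \<noteq> 0; M1 \<in> Ob C1; M2 \<in> Ob C1\<rbrakk> \<Longrightarrow>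
    Cmp C2 (J (- z) M2 M1) (VB V2 z (Fo M1) (Fo M2)) = Cmp C2 (Fm (VB V1 z M1 M2)) (J z M1 M2)"
  using is_vtf unfolding is_vertex_tensor_functor_def Let_def by meson

lemma J_iso: "\<lbrakk>strong; z \<noteq> 0; A \<in> Ob C1; B \<in> Ob C1\<rbrakk> \<Longrightarrow> is_iso C2 (J z A B)"
  using is_vtf unfolding is_vertex_tensor_functor_def Let_def by meson

lemma \<phi>_hom: "\<phi> \<in> hom C2 (VUnit V2) (Fo (VUnit V1))"
  and \<phi>_iso: "is_iso C2 \<phi>"
  using is_vtf unfolding is_vertex_tensor_functor_def Let_def by auto

declare \<phi>_hom [unfolded hom_iff, simp]

lemma J_unit_left:
  "\<lbrakk>z \<noteq> 0; M \<in> Ob C1\<rbrakk> \<Longrightarrow>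
    Cmp C2 (Fm (VL V1 z M)) (Cmp C2 (J z (VUnit V1) M) (VTar V2 z \<phi> (Idm C2 (Fo M)))) = VL V2 z (Fo M)"
  and J_unit_right:
  "\<lbrakk>z \<noteq> 0; M \<in> Ob C1\<rbrakk> \<Longrightarrow>
    Cmp C2 (Fm (VR V1 z M)) (Cmp C2 (J z M (VUnit V1)) (VTar V2 z (Idm C2 (Fo M)) \<phi>)) = VR V2 z (Fo M)"
  using is_vtf unfolding is_vertex_tensor_functor_def Let_def by auto

definition J_left :: "complex \<Rightarrow> complex \<Rightarrow> 'o1 \<Rightarrow> 'o1 \<Rightarrow> 'o1 \<Rightarrow> 'm2" where
  "J_left z w M1 M2 M3 =
    Cmp C2 (J z (VTob V1 w M1 M2) M3) (VTar V2 z (J w M1 M2) (Idm C2 (Fo M3)))"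

definition J_right :: "complex \<Rightarrow> complex \<Rightarrow> 'o1 \<Rightarrow> 'o1 \<Rightarrow> 'o1 \<Rightarrow> 'm2" where
  "J_right z w M1 M2 M3 =
    Cmp C2 (J z M1 (VTob V1 w M2 M3)) (VTar V2 z (Idm C2 (Fo M1)) (J w M2 M3))"

context
  fixes M1 M2 M3
  assumes M: "M1 \<in> Ob C1" "M2 \<in> Ob C1" "M3 \<in> Ob C1"
begin

lemma J_left_hom:
  "\<lbrakk>z \<noteq> 0; w \<noteq> 0\<rbrakk> \<Longrightarrow> J_left z w M1 M2 M3
    \<in> hom C2 (VTob V2 z (VTob V2 w (Fo M1) (Fo M2)) (Fo M3)) (Fo (VTob V1 z (VTob V1 w M1 M2) M3))"
  using M by (simp add: J_left_def)

lemma J_right_hom: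
  "\<lbrakk>z \<noteq> 0; w \<noteq> 0\<rbrakk> \<Longrightarrow> J_right z w M1 M2 M3
    \<in> hom C2 (VTob V2 z (Fo M1) (VTob V2 w (Fo M2) (Fo M3))) (Fo (VTob V1 z M1 (VTob V1 w M2 M3)))"
  using M by (simp add: J_right_def)

end

declare J_left_hom [unfolded hom_iff, simp] J_right_hom [unfolded hom_iff, simp]

lemma J_A:
  assumes "assoc_dom z1 z2" "M1 \<in> Ob C1" "M2 \<in> Ob C1" "M3 \<in> Ob C1"
  shows "Cmp C2 (J_left z2 (z1 - z2) M1 M2 M3) (VA V2 z1 z2 (Fo M1) (Fo M2) (Fo M3)) =
    Cmp C2 (Fm (VA V1 z1 z2 M1 M2 M3)) (J_right z1 z2 M1 M2 M3)"
proof -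
  have "Cmp C2 (J z2 (VTob V1 (z1 - z2) M1 M2) M3)
      (Cmp C2 (VTar V2 z2 (J (z1 - z2) M1 M2) (Idm C2 (Fo M3))) (VA V2 z1 z2 (Fo M1) (Fo M2) (Fo M3))) =
    Cmp C2 (Fm (VA V1 z1 z2 M1 M2 M3))
      (Cmp C2 (J z1 M1 (VTob V1 z2 M2 M3)) (VTar V2 z1 (Idm C2 (Fo M1)) (J z2 M2 M3)))"
    using is_vtf assms unfolding is_vertex_tensor_functor_def Let_def by blast
  then show ?thesis
    using assms assoc_dom_nonzero[OF assms(1)]
    by (simp add: J_left_def J_right_def V2.Cmp_assoc)
qed

context
  fixes M1 M2 M3 \<gamma>
  assumes M: "M1 \<in> Ob C1" "M2 \<in> Ob C1" "M3 \<in> Ob C1" and \<gamma>: "cpath \<gamma>"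
begin

lemma J_right_Par_outer:
  assumes "w \<noteq> 0"
  shows "Cmp C2 (J_right (pathfinish \<gamma>) w M1 M2 M3) (VPar V2 \<gamma> (Fo M1) (VTob V2 w (Fo M2) (Fo M3))) =
    Cmp C2 (Fm (VPar V1 \<gamma> M1 (VTob V1 w M2 M3))) (J_right (pathstart \<gamma>) w M1 M2 M3)"
proof -
  have transport: "Cmp C2 (VPar V2 \<gamma> (Fo M1) (Fo (VTob V1 w M2 M3)))
      (VTar V2 (pathstart \<gamma>) (Idm C2 (Fo M1)) (J w M2 M3)) =
    Cmp C2 (VTar V2 (pathfinish \<gamma>) (Idm C2 (Fo M1)) (J w M2 M3))
      (VPar V2 \<gamma> (Fo M1) (VTob V2 w (Fo M2) (Fo M3)))"
    using V2.Par_natural[OF \<gamma>, of "Idm C2 (Fo M1)" "J w M2 M3"] M assms by simp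
  have J_transport: "Cmp C2 (Fm (VPar V1 \<gamma> M1 (VTob V1 w M2 M3))) (J (pathstart \<gamma>) M1 (VTob V1 w M2 M3)) =
    Cmp C2 (J (pathfinish \<gamma>) M1 (VTob V1 w M2 M3)) (VPar V2 \<gamma> (Fo M1) (Fo (VTob V1 w M2 M3)))"
    using J_Par[OF \<gamma>, of M1 "VTob V1 w M2 M3"] M assms by simp
  show ?thesis
    unfolding J_right_def
    by (rule V2.comm_square_paste[OF transport J_transport, symmetric]) (use M \<gamma> assms in simp_all)
qed

lemma J_right_Par_inner:
  assumes "z \<noteq> 0"
  shows "Cmp C2 (J_right z (pathfinish \<gamma>) M1 M2 M3) (VTar V2 z (Idm C2 (Fo M1)) (VPar V2 \<gamma> (Fo M2) (Fo M3))) =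
    Cmp C2 (Fm (VTar V1 z (Idm C1 M1) (VPar V1 \<gamma> M2 M3))) (J_right z (pathstart \<gamma>) M1 M2 M3)"
proof -
  have J_transport: "Cmp C2 (VTar V2 z (Idm C2 (Fo M1)) (Fm (VPar V1 \<gamma> M2 M3)))
      (VTar V2 z (Idm C2 (Fo M1)) (J (pathstart \<gamma>) M2 M3)) =
    Cmp C2 (VTar V2 z (Idm C2 (Fo M1)) (J (pathfinish \<gamma>) M2 M3))
      (VTar V2 z (Idm C2 (Fo M1)) (VPar V2 \<gamma> (Fo M2) (Fo M3)))"
    by (rule V2.Tar_comm_square) (use M \<gamma> assms in \<open>simp_all add: J_Par\<close>)
  have natural: "Cmp C2 (Fm (VTar V1 z (Idm C1 M1) (VPar V1 \<gamma> M2 M3))) (J z M1 (VTob V1 (pathstart \<gamma>) M2 M3)) =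
    Cmp C2 (J z M1 (VTob V1 (pathfinish \<gamma>) M2 M3)) (VTar V2 z (Idm C2 (Fo M1)) (Fm (VPar V1 \<gamma> M2 M3)))"
    using J_natural[of z "Idm C1 M1" "VPar V1 \<gamma> M2 M3"] M \<gamma> assms by simp
  show ?thesis
    unfolding J_right_def
    by (rule V2.comm_square_paste[OF J_transport natural, symmetric]) (use M \<gamma> assms in simp_all)
qed

lemma J_left_Par_outer:
  assumes "w \<noteq> 0"
  shows "Cmp C2 (J_left (pathfinish \<gamma>) w M1 M2 M3) (VPar V2 \<gamma> (VTob V2 w (Fo M1) (Fo M2)) (Fo M3)) =
    Cmp C2 (Fm (VPar V1 \<gamma> (VTob V1 w M1 M2) M3)) (J_left (pathstart \<gamma>) w M1 M2 M3)"
proof -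
  have transport: "Cmp C2 (VPar V2 \<gamma> (Fo (VTob V1 w M1 M2)) (Fo M3))
      (VTar V2 (pathstart \<gamma>) (J w M1 M2) (Idm C2 (Fo M3))) =
    Cmp C2 (VTar V2 (pathfinish \<gamma>) (J w M1 M2) (Idm C2 (Fo M3)))
      (VPar V2 \<gamma> (VTob V2 w (Fo M1) (Fo M2)) (Fo M3))"
    using V2.Par_natural[OF \<gamma>, of "J w M1 M2" "Idm C2 (Fo M3)"] M assms by simp
  have J_transport: "Cmp C2 (Fm (VPar V1 \<gamma> (VTob V1 w M1 M2) M3)) (J (pathstart \<gamma>) (VTob V1 w M1 M2) M3) =
    Cmp C2 (J (pathfinish \<gamma>) (VTob V1 w M1 M2) M3) (VPar V2 \<gamma> (Fo (VTob V1 w M1 M2)) (Fo M3))"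
    using J_Par[OF \<gamma>, of "VTob V1 w M1 M2" M3] M assms by simp
  show ?thesis
    unfolding J_left_def
    by (rule V2.comm_square_paste[OF transport J_transport, symmetric]) (use M \<gamma> assms in simp_all)
qed

lemma J_left_Par_inner:
  assumes "z \<noteq> 0"
  shows "Cmp C2 (J_left z (pathfinish \<gamma>) M1 M2 M3) (VTar V2 z (VPar V2 \<gamma> (Fo M1) (Fo M2)) (Idm C2 (Fo M3))) =
    Cmp C2 (Fm (VTar V1 z (VPar V1 \<gamma> M1 M2) (Idm C1 M3))) (J_left z (pathstart \<gamma>) M1 M2 M3)"
proof -
  have J_transport: "Cmp C2 (VTar V2 z (Fm (VPar V1 \<gamma> M1 M2)) (Idm C2 (Fo M3)))
      (VTar V2 z (J (pathstart \<gamma>) M1 M2) (Idm C2 (Fo M3))) =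
    Cmp C2 (VTar V2 z (J (pathfinish \<gamma>) M1 M2) (Idm C2 (Fo M3)))
      (VTar V2 z (VPar V2 \<gamma> (Fo M1) (Fo M2)) (Idm C2 (Fo M3)))"
    by (rule V2.Tar_comm_square) (use M \<gamma> assms in \<open>simp_all add: J_Par\<close>)
  have natural: "Cmp C2 (Fm (VTar V1 z (VPar V1 \<gamma> M1 M2) (Idm C1 M3))) (J z (VTob V1 (pathstart \<gamma>) M1 M2) M3) =
    Cmp C2 (J z (VTob V1 (pathfinish \<gamma>) M1 M2) M3) (VTar V2 z (Fm (VPar V1 \<gamma> M1 M2)) (Idm C2 (Fo M3)))"
    using J_natural[of z "VPar V1 \<gamma> M1 M2" "Idm C1 M3"] M \<gamma> assms by simp
  show ?thesis
    unfolding J_left_def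
    by (rule V2.comm_square_paste[OF J_transport natural, symmetric]) (use M \<gamma> assms in simp_all)
qed

end

lemma induced_assoc_compatible:
  assumes r: "r2 < r1" "r1 - r2 < r2" "0 < r1 - r2"
    and M: "M1 \<in> Ob C1" "M2 \<in> Ob C1" "M3 \<in> Ob C1"
  shows "Cmp C2 (J 1 (VTob V1 1 M1 M2) M3)
      (Cmp C2 (VTar V2 1 (J 1 M1 M2) (Idm C2 (Fo M3))) (induced_assoc V2 r1 r2 (Fo M1) (Fo M2) (Fo M3))) =
    Cmp C2 (Fm (induced_assoc V1 r1 r2 M1 M2 M3))
      (Cmp C2 (J 1 M1 (VTob V1 1 M2 M3)) (VTar V2 1 (Idm C2 (Fo M1)) (J 1 M2 M3)))"
proof -
  let ?L = "\<lambda>z w. J_left z w M1 M2 M3" and ?R = "\<lambda>z w. J_right z w M1 M2 M3"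
  let ?q1 = "complex_of_real r1" and ?q2 = "complex_of_real r2"
  let ?T1 = "VPar V1 (rpath r2 1) (VTob V1 1 M1 M2) M3"
    and ?T2 = "VTar V1 ?q2 (VPar V1 (rpath (r1 - r2) 1) M1 M2) (Idm C1 M3)"
    and ?A = "VA V1 ?q1 ?q2 M1 M2 M3"
    and ?T3 = "VTar V1 ?q1 (Idm C1 M1) (VPar V1 (rpath 1 r2) M2 M3)"
    and ?T4 = "VPar V1 (rpath 1 r1) M1 (VTob V1 1 M2 M3)"
  let ?T1' = "VPar V2 (rpath r2 1) (VTob V2 1 (Fo M1) (Fo M2)) (Fo M3)"
    and ?T2' = "VTar V2 ?q2 (VPar V2 (rpath (r1 - r2) 1) (Fo M1) (Fo M2)) (Idm C2 (Fo M3))"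
    and ?A' = "VA V2 ?q1 ?q2 (Fo M1) (Fo M2) (Fo M3)"
    and ?T3' = "VTar V2 ?q1 (Idm C2 (Fo M1)) (VPar V2 (rpath 1 r2) (Fo M2) (Fo M3))"
    and ?T4' = "VPar V2 (rpath 1 r1) (Fo M1) (VTob V2 1 (Fo M2) (Fo M3))"
  have ad: "assoc_dom ?q1 ?q2"
    using r by (rule assoc_dom_of_real)
  have pos: "0 < r1" "0 < r2"
    using r by auto
  then have paths: "cpath (rpath r2 1)" "cpath (rpath (r1 - r2) 1)" "cpath (rpath 1 r2)" "cpath (rpath 1 r1)"
    using r by (auto intro: cpath_rpath)
  have "r1 \<noteq> 0" "r2 \<noteq> 0" "r1 \<noteq> r2"
    using pos r by auto
  note [simp] = M paths ad this
  have "Cmp C2 (?R ?q1 1) ?T4' = Cmp C2 (Fm ?T4) (?R 1 1)"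
    using J_right_Par_outer[OF M paths(4), of 1] by simp
  then have "Cmp C2 (?R ?q1 ?q2) (Cmp C2 ?T3' ?T4') = Cmp C2 (Fm (Cmp C1 ?T3 ?T4)) (?R 1 1)"
    by (rule Fm_square_paste[OF _ J_right_Par_inner[OF M paths(3), of ?q1, simplified]]) simp_all
  then have "Cmp C2 (?L ?q2 (?q1 - ?q2)) (Cmp C2 ?A' (Cmp C2 ?T3' ?T4')) =
      Cmp C2 (Fm (Cmp C1 ?A (Cmp C1 ?T3 ?T4))) (?R 1 1)"
    by (rule Fm_square_paste[OF _ J_A[OF ad M]]) simp_all
  then have "Cmp C2 (?L ?q2 1) (Cmp C2 ?T2' (Cmp C2 ?A' (Cmp C2 ?T3' ?T4'))) =
      Cmp C2 (Fm (Cmp C1 ?T2 (Cmp C1 ?A (Cmp C1 ?T3 ?T4)))) (?R 1 1)"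
    by (rule Fm_square_paste[OF _ J_left_Par_inner[OF M paths(2), of ?q2, simplified]]) simp_all
  then have "Cmp C2 (?L 1 1) (Cmp C2 ?T1' (Cmp C2 ?T2' (Cmp C2 ?A' (Cmp C2 ?T3' ?T4')))) =
      Cmp C2 (Fm (Cmp C1 ?T1 (Cmp C1 ?T2 (Cmp C1 ?A (Cmp C1 ?T3 ?T4))))) (?R 1 1)"
    by (rule Fm_square_paste[OF _ J_left_Par_outer[OF M paths(1), of 1, simplified]]) simp_all
  then show ?thesis
    by (simp add: induced_assoc_def Let_def J_left_def J_right_def V2.Cmp_assoc)
qed

lemma induced_braiding_compatible:
  assumes "M1 \<in> Ob C1" "M2 \<in> Ob C1"
  shows "Cmp C2 (J 1 M2 M1) (Cmp C2 (VPar V2 minus_one_to_one (Fo M2) (Fo M1)) (VB V2 1 (Fo M1) (Fo M2))) =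
    Cmp C2 (Fm (Cmp C1 (VPar V1 minus_one_to_one M2 M1) (VB V1 1 M1 M2))) (J 1 M1 M2)"
  using assms cpath_minus_one_to_one
  by (intro Fm_square_paste[OF J_B J_Par[OF cpath_minus_one_to_one, simplified]]) simp_all

end

theorem mainTheorem13:
  fixes strong :: bool
    and V1 :: "('o1, 'm1) vtc_data" and V2 :: "('o2, 'm2) vtc_data"
    and Fo :: "'o1 \<Rightarrow> 'o2" and Fm :: "'m1 \<Rightarrow> 'm2"
    and J :: "complex \<Rightarrow> 'o1 \<Rightarrow> 'o1 \<Rightarrow> 'm2" and \<phi> :: 'm2
    and r1 r2 :: real
  assumes "is_vtc V1" and "is_vtc V2"
    and "is_vertex_tensor_functor strong V1 V2 Fo Fm J \<phi>"
    and "r1 > r2" and "r2 > r1 - r2" and "r1 - r2 > 0"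
  shows "is_braided_tensor_functor strong (induced_btc V1 r1 r2) (induced_btc V2 r1 r2)
           Fo Fm (J 1) \<phi>"
proof -
  interpret vertex_tensor_functor V1 V2 strong Fo Fm J \<phi>
    using assms(1-3) by unfold_locales
  show ?thesis
    unfolding is_braided_tensor_functor_def induced_btc_def Let_def btc_data.simps
    by (auto simp: is_functor J_iso J_natural \<phi>_iso J_unit_left J_unit_right
        induced_assoc_compatible[OF assms(4-6)] induced_braiding_compatible)
qed

end
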